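(* Consider the family of NSG-compositions $x_1+\cdots+x_{m-1}$ with maximum $5$ whose last maximal part $x_l=5$ (i.e. $x_l=5$ and $x_i<5$ for $i>l$) satisfies $3l\ge m-1$. Its growth-rate is at most $1/\rho$, where $\rho=0.6189\ldots>\omega^{-1}$ is the positive root of $1-I_5I_4^2$, with $I_4=3q^4+4q^5+3q^6+2q^7+q^8$ and $I_5=4q^5+5q^6+4q^7+3q^8+2q^9+q^{10}$. In particular this growth-rate is strictly smaller than $\omega=\frac{1+\sqrt5}2$.
   Context: An NSG-composition is a composition $x_1+\cdots+x_{m-1}$ of positive integers satisfying $x_{s+t}\le x_s+x_t$ and $x_{m-s-t}\le x_{m-s}+x_{m-t}+1$ for all $s,t\ge1$, $s+t<m$ (equivalently, the Kunz vector of a numerical semigroup of multiplicity $m$); its genus is $\sum x_j$. The growth-rate of a family is $\limsup_{g\to\infty}a_g^{1/g}$ with $a_g$ the number of members of genus $g$. *)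

theory Defs
  imports "HOL-Analysis.Analysis"
begin

text \<open>A composition x_1+...+x_{m-1} is represented by the list xs with
  xs ! (j-1) = x_j, so m = length xs + 1.\<close>

definition part :: "nat list \<Rightarrow> nat \<Rightarrow> nat" where
  "part xs j = xs ! (j - 1)"

definition nsg_comp :: "nat list \<Rightarrow> bool" where
  "nsg_comp xs \<longleftrightarrow>
     (let m = length xs + 1 in
       (\<forall>x\<in>set xs. x > 0) \<and>
       (\<forall>s t. 1 \<le> s \<longrightarrow> 1 \<le> t \<longrightarrow> s + t < m \<longrightarrow>
          part xs (s + t) \<le> part xs s + part xs t \<and>
          part xs (m - s - t) \<le> part xs (m - s) + part xs (m - t) + 1))"

definition genus :: "nat list \<Rightarrow> nat" where
  "genus xs = sum_list xs"

definition last_max5 :: "nat list \<Rightarrow> nat" where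
  "last_max5 xs = Max {l. 1 \<le> l \<and> l \<le> length xs \<and> part xs l = 5}"

definition fam5 :: "nat list \<Rightarrow> bool" where
  "fam5 xs \<longleftrightarrow> nsg_comp xs \<and> 5 \<in> set xs \<and> (\<forall>x\<in>set xs. x \<le> 5)
     \<and> 3 * last_max5 xs \<ge> length xs"

definition count_fam5 :: "nat \<Rightarrow> nat" where
  "count_fam5 g = card {xs. fam5 xs \<and> genus xs = g}"

definition growth_rate :: "(nat \<Rightarrow> nat) \<Rightarrow> ereal" where
  "growth_rate a = limsup (\<lambda>g. ereal (root g (real (a g))))"

definition I4 :: "real \<Rightarrow> real" where
  "I4 q = 3*q^4 + 4*q^5 + 3*q^6 + 2*q^7 + q^8"

definition I5 :: "real \<Rightarrow> real" where
  "I5 q = 4*q^5 + 5*q^6 + 4*q^7 + 3*q^8 + 2*q^9 + q^10"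

definition omega :: real where
  "omega = (1 + sqrt 5) / 2"

end

theory Submission
  imports Defs "HOL-Real_Asymp.Real_Asymp"
begin

text \<open>Cut a member of the family at its last part equal to 5, say at index l. The
  inequality x_l \<le> x_s + x_(l-s) forces mirror pairs of the prefix to sum to at least 5,
  and the second NSG inequality forces mirror pairs of the suffix, whose parts are at
  most 4, to sum to at least 4. Peeling off mirror pairs bounds the generating functions
  of such lists by constants times powers of I5 and I4, with half the lengths as
  exponents. As 3l \<ge> m - 1, the I4-exponent is at most twice the I5-exponent plus 2,
  so at q = \<rho>, where I5 I4^2 = 1 and I4 \<ge> 1, every shape (m, l) contributes a bounded
  amount. There are O(g^2) shapes of genus g, hence count(g) \<rho>^g = O(g^2).\<close>

definition mirror_lists :: "nat \<Rightarrow> nat \<Rightarrow> nat \<Rightarrow> nat list set" where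
  "mirror_lists M T k =
     {u. length u = k \<and> (\<forall>x\<in>set u. 1 \<le> x \<and> x \<le> M) \<and> (\<forall>i<k. T \<le> u!i + u!(k-1-i))}"

definition mirror_pairs :: "nat \<Rightarrow> nat \<Rightarrow> (nat \<times> nat) set" where
  "mirror_pairs M T = {p \<in> {1..M} \<times> {1..M}. T \<le> fst p + snd p}"

definition mirror_series :: "nat \<Rightarrow> nat \<Rightarrow> real \<Rightarrow> real" where
  "mirror_series M T q = (\<Sum>a=1..M. \<Sum>b=1..M. if T \<le> a + b then q^(a+b) else 0)"

lemma finite_mirror_lists: "finite (mirror_lists M T k)"
proof (rule finite_subset)
  show "mirror_lists M T k \<subseteq> {xs. set xs \<subseteq> {1..M} \<and> length xs = k}"
    unfolding mirror_lists_def by auto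
qed (simp add: finite_lists_length_eq)

lemma mirror_series_eq_sum_pairs:
  "mirror_series M T q = (\<Sum>(a, b)\<in>mirror_pairs M T. q^(a+b))"
proof -
  have "(\<Sum>(a, b)\<in>mirror_pairs M T. q^(a+b)) =
        (\<Sum>p\<in>{1..M} \<times> {1..M}. if T \<le> fst p + snd p then q^(fst p + snd p) else 0)"
    unfolding mirror_pairs_def by (simp add: sum.inter_filter case_prod_beta)
  then show ?thesis
    unfolding mirror_series_def by (simp add: sum.cartesian_product case_prod_beta)
qed

lemma mirror_series_nonneg: "0 \<le> q \<Longrightarrow> 0 \<le> mirror_series M T q"
  unfolding mirror_series_def by (intro sum_nonneg) auto

lemma mirror_lists_Suc_Suc:
  assumes "u \<in> mirror_lists M T (Suc (Suc k))"
  shows "u \<in> (\<lambda>((a, b), v). a # v @ [b]) ` (mirror_pairs M T \<times> mirror_lists M T k)"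
proof -
  from assms have len: "length u = Suc (Suc k)"
    and vals: "\<forall>x\<in>set u. 1 \<le> x \<and> x \<le> M"
    and mirror: "\<forall>i<Suc (Suc k). T \<le> u!i + u!(Suc k - i)"
    unfolding mirror_lists_def by auto
  obtain a v b where u: "u = a # v @ [b]"
    using len by (metis Suc_length_conv rev_exhaust append_Nil length_0_conv nat.distinct(1))
  have lv: "length v = k" using len u by simp
  have "T \<le> a + b" using mirror[rule_format, of 0] u lv by (simp add: nth_append)
  moreover have "a \<in> {1..M}" "b \<in> {1..M}" using vals u by auto
  ultimately have "(a, b) \<in> mirror_pairs M T" unfolding mirror_pairs_def by simp
  moreover have "v \<in> mirror_lists M T k"
    unfolding mirror_lists_def
  proof (intro CollectI conjI allI impI ballI)
    fix i assume i: "i < k"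
    have "T \<le> u!(Suc i) + u!(Suc k - Suc i)" using mirror[rule_format, of "Suc i"] i by simp
    moreover have "Suc k - Suc i = Suc (k-1-i)" using i by simp
    ultimately show "T \<le> v!i + v!(k-1-i)" using i lv u by (simp add: nth_append)
  qed (use vals u lv in auto)
  ultimately show ?thesis using u by (intro image_eqI[where x="((a, b), v)"]) auto
qed

text \<open>The factor 1 + \<Sum>q^x pays for the unpaired middle entry of an odd-length list.\<close>

lemma sum_mirror_lists_le:
  fixes q :: real
  assumes q: "0 \<le> q"
  shows "(\<Sum>u\<in>mirror_lists M T k. q^(sum_list u))
           \<le> (1 + (\<Sum>x=1..M. q^x)) * mirror_series M T q ^ (k div 2)"
proof (induction k rule: nat_less_induct)
  case (1 k)
  have c0: "0 \<le> (\<Sum>x=1..M. q^x)" using q by (intro sum_nonneg) auto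
  consider "k = 0" | "k = 1" | k' where "k = Suc (Suc k')"
    by (metis One_nat_def not0_implies_Suc)
  then show ?case
  proof cases
    case 1
    then have "mirror_lists M T k = {[]}" unfolding mirror_lists_def by auto
    then show ?thesis using 1 c0 by simp
  next
    case 2
    have "mirror_lists M T k \<subseteq> (\<lambda>x. [x]) ` {1..M}"
      unfolding mirror_lists_def 2 by (auto simp: length_Suc_conv)
    then have "(\<Sum>u\<in>mirror_lists M T k. q^(sum_list u)) \<le> (\<Sum>u\<in>(\<lambda>x. [x]) ` {1..M}. q^(sum_list u))"
      using q by (intro sum_mono2) auto
    also have "\<dots> = (\<Sum>x=1..M. q^x)"
      by (subst sum.reindex) (auto simp: inj_on_def)
    finally show ?thesis using 2 by simp
  next
    case 3
    define f where "f = (\<lambda>((a::nat, b::nat), v). a # v @ [b])"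
    have fin: "finite (mirror_pairs M T \<times> mirror_lists M T k')"
      unfolding mirror_pairs_def using finite_mirror_lists by auto
    have "(\<Sum>u\<in>mirror_lists M T k. q^(sum_list u)) \<le> (\<Sum>u\<in>f ` (mirror_pairs M T \<times> mirror_lists M T k'). q^(sum_list u))"
      using mirror_lists_Suc_Suc[of _ M T k'] 3 fin q
      by (intro sum_mono2) (auto simp: f_def)
    also have "\<dots> \<le> (\<Sum>x\<in>mirror_pairs M T \<times> mirror_lists M T k'. q^(sum_list (f x)))"
      using sum_image_le[OF fin, of "\<lambda>u. q^(sum_list u)" f] q by (simp add: o_def)
    also have "\<dots> = (\<Sum>x\<in>mirror_pairs M T \<times> mirror_lists M T k'. q^(fst (fst x) + snd (fst x)) * q^(sum_list (snd x)))"
      by (intro sum.cong) (auto simp: f_def power_add ac_simps)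
    also have "\<dots> = (\<Sum>(a, b)\<in>mirror_pairs M T. q^(a+b)) * (\<Sum>v\<in>mirror_lists M T k'. q^(sum_list v))"
      by (simp add: sum_product sum.cartesian_product case_prod_beta)
    also have "\<dots> \<le> mirror_series M T q * ((1 + (\<Sum>x=1..M. q^x)) * mirror_series M T q ^ (k' div 2))"
      using "1"[rule_format, of k'] 3 mirror_series_nonneg[OF q]
      by (simp only: mirror_series_eq_sum_pairs[symmetric]) (intro mult_left_mono, auto)
    also have "\<dots> = (1 + (\<Sum>x=1..M. q^x)) * mirror_series M T q ^ (k div 2)"
      using 3 by simp
    finally show ?thesis .
  qed
qed

lemma mirror_series_5_5: "mirror_series 5 5 q = I5 q"
  unfolding mirror_series_def I5_def by (simp add: numeral_eq_Suc)

lemma mirror_series_4_4: "mirror_series 4 4 q = I4 q"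
  unfolding mirror_series_def I4_def by (simp add: numeral_eq_Suc)

lemma nsg_comp_prefix_mirror:
  assumes "nsg_comp xs" "Suc i < l" "l \<le> length xs"
  shows "xs!(l-1) \<le> xs!i + xs!(l-2-i)"
proof -
  have "\<forall>s t. 1 \<le> s \<longrightarrow> 1 \<le> t \<longrightarrow> s + t < length xs + 1 \<longrightarrow>
          part xs (s + t) \<le> part xs s + part xs t"
    using assms(1) unfolding nsg_comp_def Let_def by auto
  moreover have "1 \<le> Suc i" "1 \<le> l-1-i" "Suc i + (l-1-i) < length xs + 1"
    using assms(2,3) by auto
  ultimately have "part xs (Suc i + (l-1-i)) \<le> part xs (Suc i) + part xs (l-1-i)"
    by blast
  moreover have "Suc i + (l-1-i) = l" "l-1-i-1 = l-2-i" using assms(2) by auto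
  ultimately show ?thesis unfolding part_def by simp
qed

lemma nsg_comp_suffix_mirror:
  assumes "nsg_comp xs" "1 \<le> l" "l + j < length xs"
  shows "xs!(l-1) \<le> xs!(l+j) + xs!(length xs - 1 - j) + 1"
proof -
  define m where "m = length xs + 1"
  have "\<forall>s t. 1 \<le> s \<longrightarrow> 1 \<le> t \<longrightarrow> s + t < m \<longrightarrow>
          part xs (m - s - t) \<le> part xs (m - s) + part xs (m - t) + 1"
    using assms(1) unfolding nsg_comp_def Let_def m_def by auto
  moreover have "1 \<le> m-1-l-j" "1 \<le> Suc j" "(m-1-l-j) + Suc j < m"
    using assms(2,3) unfolding m_def by auto
  ultimately have ineq: "part xs (m - (m-1-l-j) - Suc j) \<le> part xs (m - (m-1-l-j)) + part xs (m - Suc j) + 1"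
    by blast
  have eqs: "m - (m-1-l-j) - Suc j = l" "m - (m-1-l-j) = Suc (l+j)"
    "m - Suc j = Suc (length xs - 1 - j)"
    using assms(3) unfolding m_def by auto
  show ?thesis using ineq unfolding eqs part_def by simp
qed

lemma last_max5:
  assumes "5 \<in> set xs"
  shows "1 \<le> last_max5 xs" "last_max5 xs \<le> length xs" "xs!(last_max5 xs - 1) = 5"
    and "\<And>j. last_max5 xs \<le> j \<Longrightarrow> j < length xs \<Longrightarrow> xs!j \<noteq> 5"
proof -
  define S where "S = {l. 1 \<le> l \<and> l \<le> length xs \<and> part xs l = 5}"
  have fin: "finite S" unfolding S_def by (rule finite_subset[of _ "{1..length xs}"]) auto
  have max: "last_max5 xs = Max S" unfolding last_max5_def S_def ..
  obtain i where "i < length xs" "xs!i = 5" using assms by (auto simp: in_set_conv_nth)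
  then have "Suc i \<in> S" unfolding S_def part_def by auto
  then have "S \<noteq> {}" by auto
  then have "last_max5 xs \<in> S"
    using Max_in[OF fin] unfolding max by simp
  then show "1 \<le> last_max5 xs" "last_max5 xs \<le> length xs" "xs!(last_max5 xs - 1) = 5"
    unfolding S_def part_def by auto
  fix j assume "last_max5 xs \<le> j" "j < length xs"
  then have "Suc j \<notin> S"
    using Max_ge[OF fin, of "Suc j"] unfolding max by linarith
  then show "xs!j \<noteq> 5" using \<open>j < length xs\<close> unfolding S_def part_def by auto
qed

lemma fam5_decomp:
  assumes "fam5 xs"
  defines "l \<equiv> last_max5 xs"
  shows "xs = take (l-1) xs @ 5 # drop l xs"
    and "take (l-1) xs \<in> mirror_lists 5 5 (l-1)"
    and "drop l xs \<in> mirror_lists 4 4 (length xs - l)"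
    and "1 \<le> l" "l \<le> length xs" "length xs \<le> 3 * l"
proof -
  have nsg: "nsg_comp xs" and five: "5 \<in> set xs" and le5: "\<forall>x\<in>set xs. x \<le> 5"
    and "length xs \<le> 3 * l" using assms unfolding fam5_def by auto
  have pos: "\<forall>x\<in>set xs. 0 < x" using nsg unfolding nsg_comp_def by auto
  note l = last_max5[OF five, folded l_def]
  show "1 \<le> l" "l \<le> length xs" "length xs \<le> 3 * l" by fact+
  show "xs = take (l-1) xs @ 5 # drop l xs"
    using id_take_nth_drop[of "l-1" xs] l(1-3) by simp
  show "take (l-1) xs \<in> mirror_lists 5 5 (l-1)"
    unfolding mirror_lists_def
  proof (intro CollectI conjI allI impI ballI)
    fix i assume "i < l-1"
    then show "5 \<le> take (l-1) xs ! i + take (l-1) xs ! (l-1-1-i)"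
      using nsg_comp_prefix_mirror[OF nsg, of i l] l(2,3) by (simp add: diff_diff_add)
  qed (use l(2) pos le5 in \<open>auto dest!: in_set_takeD\<close>)
  show "drop l xs \<in> mirror_lists 4 4 (length xs - l)"
    unfolding mirror_lists_def
  proof (intro CollectI conjI allI impI ballI)
    fix x assume "x \<in> set (drop l xs)"
    then obtain j where "l + j < length xs" "x = xs!(l+j)"
      by (metis in_set_conv_nth length_drop less_diff_conv add.commute nth_drop l(2))
    then show "1 \<le> x" "x \<le> 4"
      using l(4)[of "l+j"] pos le5 nth_mem[of "l+j" xs] by fastforce+
  next
    fix j assume "j < length xs - l"
    moreover have "l + (length xs - l - 1 - j) = length xs - 1 - j" using calculation by simp
    ultimately show "4 \<le> drop l xs ! j + drop l xs ! (length xs - l - 1 - j)"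
      using nsg_comp_suffix_mirror[OF nsg l(1), of j] l(3) by simp
  qed simp
qed

lemma nsg_comp_length_le_genus:
  assumes "nsg_comp xs"
  shows "length xs \<le> genus xs"
proof -
  have "\<forall>x\<in>set xs. 0 < x" using assms unfolding nsg_comp_def by auto
  then show ?thesis unfolding genus_def by (induction xs) auto
qed

definition shape_bound :: "real \<Rightarrow> real" where
  "shape_bound q = q^5 * (1 + (\<Sum>x=1..5. q^x)) * (1 + (\<Sum>x=1..4. q^x)) * (I4 q)^2"

lemma shape_bound_nonneg: "0 \<le> q \<Longrightarrow> 0 \<le> shape_bound q"
  unfolding shape_bound_def by (intro mult_nonneg_nonneg add_nonneg_nonneg sum_nonneg) auto

lemma power_mult_power_le_of_mult_sq_eq_1:
  fixes a b :: real
  assumes "a * b^2 = 1" "1 \<le> b" "0 \<le> a" "j \<le> 2*i + 2"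
  shows "a^i * b^j \<le> b^2"
proof -
  have "a^i * b^j \<le> a^i * b^(2*i + 2)"
    using assms by (intro mult_left_mono power_increasing) auto
  also have "\<dots> = (a * b^2)^i * b^2"
    by (simp only: power_mult_distrib power_add power_mult mult.assoc)
  finally show ?thesis using assms(1) by simp
qed

lemma sum_shape_le_shape_bound:
  fixes q :: real
  assumes q: "0 \<le> q" and root: "I5 q * (I4 q)^2 = 1" and I4: "1 \<le> I4 q"
    and shape: "1 \<le> l" "n \<le> 3 * l"
  shows "(\<Sum>(u, w)\<in>mirror_lists 5 5 (l-1) \<times> mirror_lists 4 4 (n-l). q^(sum_list (u @ 5 # w)))
           \<le> shape_bound q"
proof -
  define C5 where "C5 = 1 + (\<Sum>x=1..5. q^x)"
  define C4 where "C4 = 1 + (\<Sum>x=1..4. q^x)"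
  have C: "0 \<le> C5" "0 \<le> C4" unfolding C5_def C4_def using q by (auto intro!: add_nonneg_nonneg sum_nonneg)
  have I5: "0 \<le> I5 q" using q unfolding I5_def by simp
  have "(\<Sum>(u, w)\<in>mirror_lists 5 5 (l-1) \<times> mirror_lists 4 4 (n-l). q^(sum_list (u @ 5 # w)))
        = q^5 * ((\<Sum>u\<in>mirror_lists 5 5 (l-1). q^(sum_list u)) * (\<Sum>w\<in>mirror_lists 4 4 (n-l). q^(sum_list w)))"
    by (simp add: sum_product sum.cartesian_product sum_distrib_left case_prod_beta power_add ac_simps)
  also have "\<dots> \<le> q^5 * ((C5 * I5 q ^ ((l-1) div 2)) * (C4 * I4 q ^ ((n-l) div 2)))"
    using sum_mirror_lists_le[OF q, of 5 5 "l-1"] sum_mirror_lists_le[OF q, of 4 4 "n-l"] q C I5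
    unfolding mirror_series_5_5 mirror_series_4_4 C5_def[symmetric] C4_def[symmetric]
    by (intro mult_left_mono mult_mono) (auto intro!: sum_nonneg)
  also have "\<dots> = q^5 * C5 * C4 * (I5 q ^ ((l-1) div 2) * I4 q ^ ((n-l) div 2))"
    by (simp add: ac_simps)
  also have "\<dots> \<le> q^5 * C5 * C4 * (I4 q)^2"
    using power_mult_power_le_of_mult_sq_eq_1[OF root I4 I5, of "(n-l) div 2" "(l-1) div 2"] shape q C
    by (intro mult_left_mono) auto
  finally show ?thesis unfolding shape_bound_def C5_def C4_def .
qed

lemma count_fam5_le:
  fixes q :: real
  assumes q: "0 \<le> q" and root: "I5 q * (I4 q)^2 = 1" and I4: "1 \<le> I4 q"
  shows "real (count_fam5 g) * q^g \<le> shape_bound q * (real g + 1)^2"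
proof -
  define shapes where "shapes = {(n, l). n \<le> g \<and> 1 \<le> l \<and> l \<le> n \<and> n \<le> 3 * l}"
  define B where "B = (\<lambda>(n, l). mirror_lists 5 5 (l-1) \<times> mirror_lists 4 4 (n-l))"
  define glue where "glue = (\<lambda>(p :: nat \<times> nat, u, w :: nat list). u @ 5 # w)"
  define F where "F = {xs. fam5 xs \<and> genus xs = g}"
  have shapes_sub: "shapes \<subseteq> {..g} \<times> {..g}" unfolding shapes_def by auto
  then have fin_shapes: "finite shapes" by (rule finite_subset) simp
  have fin: "finite (Sigma shapes B)"
    using fin_shapes finite_mirror_lists unfolding B_def by (auto simp: case_prod_beta)
  have "F \<subseteq> glue ` Sigma shapes B"
  proof
    fix xs assume "xs \<in> F"
    then have xs: "fam5 xs" "genus xs = g" unfolding F_def by auto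
    define l where "l = last_max5 xs"
    note d = fam5_decomp[OF xs(1), folded l_def]
    have "length xs \<le> g"
      using nsg_comp_length_le_genus xs unfolding fam5_def by auto
    then have "((length xs, l), take (l-1) xs, drop l xs) \<in> Sigma shapes B"
      using d unfolding shapes_def B_def by auto
    then show "xs \<in> glue ` Sigma shapes B"
      using d(1) unfolding glue_def by force
  qed
  moreover have "real (count_fam5 g) * q^g = (\<Sum>xs\<in>F. q^(sum_list xs))"
    unfolding count_fam5_def F_def by (simp add: genus_def)
  ultimately have "real (count_fam5 g) * q^g \<le> (\<Sum>xs\<in>glue ` Sigma shapes B. q^(sum_list xs))"
    using fin q by (auto intro: sum_mono2)
  also have "\<dots> \<le> (\<Sum>x\<in>Sigma shapes B. q^(sum_list (glue x)))"
    using sum_image_le[OF fin, of "\<lambda>u. q^(sum_list u)" glue] q by (simp add: o_def)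
  also have "\<dots> = (\<Sum>p\<in>shapes. \<Sum>x\<in>B p. q^(sum_list (glue (p, x))))"
    using fin_shapes finite_mirror_lists
    by (subst sum.Sigma) (auto simp: B_def case_prod_beta)
  also have "\<dots> \<le> (\<Sum>p\<in>shapes. shape_bound q)"
    using sum_shape_le_shape_bound[OF q root I4]
    by (intro sum_mono) (auto simp: shapes_def B_def glue_def case_prod_beta)
  also have "\<dots> \<le> real ((g + 1)^2) * shape_bound q"
    using card_mono[OF _ shapes_sub] shape_bound_nonneg[OF q]
    by (simp add: card_cartesian_product power2_eq_square mult_right_mono del: of_nat_mult)
  finally show ?thesis by (simp add: mult.commute add.commute)
qed

lemma root_const_mult_poly_tendsto_1:
  assumes "0 < C"
  shows "(\<lambda>g. root g (C * (real g + 1)^d)) \<longlonglongrightarrow> 1"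
proof -
  have "(\<lambda>g. (real g + 1) powr (1 / real g)) \<longlonglongrightarrow> 1" by real_asymp
  moreover have "\<forall>\<^sub>F g in sequentially. (real g + 1) powr (1 / real g) = root g (real g + 1)"
    using eventually_gt_at_top[of 0] by eventually_elim (simp add: root_powr_inverse)
  ultimately have "(\<lambda>g. root g (real g + 1)) \<longlonglongrightarrow> 1"
    by (rule Lim_transform_eventually)
  then have "(\<lambda>g. root g C * root g (real g + 1) ^ d) \<longlonglongrightarrow> 1 * 1 ^ d"
    using LIMSEQ_root_const[OF assms] by (intro tendsto_intros)
  moreover have "root g C * root g (real g + 1) ^ d = root g (C * (real g + 1)^d)" for g
    by (cases "g = 0") (simp_all add: real_root_mult real_root_power)
  ultimately show ?thesis by simp
qed

lemma growth_rate_le_of_poly_bound: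
  fixes q C :: real
  assumes q: "0 < q" and C: "0 < C" and bound: "\<And>g. real (a g) * q^g \<le> C * (real g + 1)^d"
  shows "growth_rate a \<le> ereal (1 / q)"
proof -
  define h where "h g = root g (C * (real g + 1)^d) / q" for g
  have "root g (real (a g)) \<le> h g" if "g > 0" for g
  proof -
    have "root g (real (a g)) \<le> root g (C * (real g + 1)^d / q^g)"
      using bound[of g] q that by (simp add: field_simps)
    also have "\<dots> = h g"
      using that q by (simp add: h_def real_root_divide real_root_pos2)
    finally show ?thesis .
  qed
  then have "growth_rate a \<le> limsup (\<lambda>g. ereal (h g))"
    unfolding growth_rate_def
    by (intro Limsup_mono eventually_mono[OF eventually_gt_at_top[of 0]]) simp
  also have "limsup (\<lambda>g. ereal (h g)) = ereal (1 / q)"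
    using root_const_mult_poly_tendsto_1[OF C, of d] q unfolding h_def
    by (intro lim_imp_Limsup) (auto intro!: tendsto_intros)
  finally show ?thesis .
qed

lemma I5_I4_sq_mono: "0 \<le> x \<Longrightarrow> x \<le> y \<Longrightarrow> I5 x * (I4 x)^2 \<le> I5 y * (I4 y)^2"
  unfolding I4_def I5_def by (intro mult_mono power_mono add_mono mult_left_mono) auto

lemma I5_I4_sq_root_bounds:
  assumes "0 < \<rho>" "I5 \<rho> * (I4 \<rho>)^2 = 1"
  shows "6189/10000 < \<rho>" "\<rho> < 619/1000"
proof -
  have "I5 (6189/10000) * (I4 (6189/10000))^2 < 1"
    by (simp add: I4_def I5_def power_divide power2_eq_square)
  then show "6189/10000 < \<rho>"
    using I5_I4_sq_mono[of \<rho> "6189/10000"] assms by fastforce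
  have "1 < I5 (619/1000) * (I4 (619/1000))^2"
    by (simp add: I4_def I5_def power_divide power2_eq_square)
  then show "\<rho> < 619/1000"
    using I5_I4_sq_mono[of "619/1000" \<rho>] assms by fastforce
qed

lemma omega_gt: "10000/6189 < omega"
proof -
  have "(22316/10000::real) < sqrt 5" by (rule real_less_rsqrt) (simp add: power2_eq_square)
  then show ?thesis unfolding omega_def by simp
qed

lemma one_le_I4:
  assumes "6189/10000 \<le> x"
  shows "1 \<le> I4 x"
proof -
  have "1 \<le> I4 (6189/10000)" by (simp add: I4_def power_divide)
  also have "\<dots> \<le> I4 x"
    unfolding I4_def using assms by (intro add_mono mult_left_mono power_mono) auto
  finally show ?thesis .
qed

theorem proposition11p4:
  fixes \<rho> :: real
  assumes "\<rho> > 0" and "1 - I5 \<rho> * (I4 \<rho>)^2 = 0"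
  shows "growth_rate count_fam5 \<le> ereal (1 / \<rho>)
         \<and> 0.6189 < \<rho> \<and> \<rho> < 0.619 \<and> \<rho> > 1 / omega
         \<and> growth_rate count_fam5 < ereal omega"
proof -
  have root: "I5 \<rho> * (I4 \<rho>)^2 = 1" using assms(2) by simp
  note bounds = I5_I4_sq_root_bounds[OF assms(1) root]
  have I4: "1 \<le> I4 \<rho>" using one_le_I4 bounds(1) by simp
  have "0 < shape_bound \<rho>"
    unfolding shape_bound_def using assms(1) I4
    by (intro mult_pos_pos add_pos_nonneg sum_nonneg) auto
  then have growth: "growth_rate count_fam5 \<le> ereal (1 / \<rho>)"
    using count_fam5_le[OF _ root I4] assms(1) by (intro growth_rate_le_of_poly_bound) auto
  have "1 / \<rho> < 10000/6189" "1 / omega < 6189/10000"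
    using bounds(1) assms(1) omega_gt by (auto simp: field_simps)
  then have "1 / \<rho> < omega" "1 / omega < \<rho>"
    using omega_gt bounds(1) by linarith+
  then show ?thesis
    using growth bounds order.strict_trans1[OF growth] by auto
qed

end
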